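(* Let $\lambda>0$, $\mathbf{A}\in\mathbb{R}^{m\times n}$ with columns $\mathbf{a}_1,\dots,\mathbf{a}_n$, let $f:\mathbb{R}^m\to\mathbb{R}\cup\{+\infty\}$ be proper, closed and convex, and let $h:\mathbb{R}\to\mathbb{R}\cup\{+\infty\}$ be proper, closed and convex with $0\in\mathrm{dom}(h)$, $h(0)=0$, and $0$ an accumulation point of $\mathrm{dom}(h)$. Let $\nu=(\mathcal{S}_0,\mathcal{S}_1,\mathcal{S}_\bullet)$ and $\nu'=(\mathcal{S}_0',\mathcal{S}_1',\mathcal{S}_\bullet')$ be partitions of $\{1,\dots,n\}$ with $\mathcal{S}_0\subseteq\mathcal{S}_0'$ and $\mathcal{S}_1\subseteq\mathcal{S}_1'$. Then for all $\mathbf{u}\in\mathbb{R}^m$, $$D^{\nu'}(\mathbf{u})=D^\nu(\mathbf{u})+\sum_{i\in\mathcal{S}_0'\setminus\mathcal{S}_0}\phi_0(\mathbf{a}_i^\top\mathbf{u})+\sum_{i\in\mathcal{S}_1'\setminus\mathcal{S}_1}\phi_1(\mathbf{a}_i^\top\mathbf{u}).$$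
   Context: $\|\mathbf{x}\|_0$ is the number of nonzero entries of $\mathbf{x}$; $\eta(\text{condition})=0$ if the condition holds and $+\infty$ otherwise; $\omega^*$ denotes the convex conjugate of a function $\omega$. An accumulation point $0$ of a set $\mathcal{C}\subseteq\mathbb{R}$: every neighborhood of $0$ contains a point of $\mathcal{C}$ other than $0$. For a partition $\nu=(\mathcal{S}_0,\mathcal{S}_1,\mathcal{S}_\bullet)$ of $\{1,\dots,n\}$: $\mathcal{X}^\nu=\{\mathbf{x}\in\mathbb{R}^n: x_i=0\ \forall i\in\mathcal{S}_0,\ x_i\neq0\ \forall i\in\mathcal{S}_1\}$; $g^\nu(\mathbf{x})=\lambda\|\mathbf{x}\|_0+\sum_{i=1}^n h(x_i)+\eta(\mathbf{x}\in\mathcal{X}^\nu)$; and $D^\nu(\mathbf{u})=-f^*(-\mathbf{u})-(g^\nu)^*(\mathbf{A}^\top\mathbf{u})$ for $\mathbf{u}\in\mathbb{R}^m$. The functions $\phi_0,\phi_1:\mathbb{R}\to\mathbb{R}\cup\{+\infty\}$ are $\phi_0(v)=\max(h^*(v)-\lambda,0)$ and $\phi_1(v)=\max(\lambda-h^*(v),0)$. *)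

theory Defs
  imports "HOL-Analysis.Analysis"
begin

definition proper_fun :: "('a \<Rightarrow> ereal) \<Rightarrow> bool" where
  "proper_fun f \<longleftrightarrow> (\<forall>x. f x \<noteq> -\<infinity>) \<and> (\<exists>x. f x < \<infinity>)"

definition epigraph_e :: "('a \<Rightarrow> ereal) \<Rightarrow> ('a \<times> real) set" where
  "epigraph_e f = {(x, r). f x \<le> ereal r}"

definition convex_fun :: "('a::real_vector \<Rightarrow> ereal) \<Rightarrow> bool" where
  "convex_fun f \<longleftrightarrow> convex (epigraph_e f)"

definition closed_fun :: "('a::topological_space \<Rightarrow> ereal) \<Rightarrow> bool" where
  "closed_fun f \<longleftrightarrow> closed (epigraph_e f)"

definition edom :: "('a \<Rightarrow> ereal) \<Rightarrow> 'a set" where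
  "edom f = {x. f x < \<infinity>}"

definition conj :: "('a::real_inner \<Rightarrow> ereal) \<Rightarrow> 'a \<Rightarrow> ereal" where
  "conj f y = (SUP x. ereal (x \<bullet> y) - f x)"

definition l0 :: "real ^ 'n \<Rightarrow> nat" where
  "l0 x = card {i. x $ i \<noteq> 0}"

definition partition3 :: "'n set \<times> 'n set \<times> 'n set \<Rightarrow> bool" where
  "partition3 \<nu> = (case \<nu> of (S0, S1, Sb) \<Rightarrow>
     S0 \<inter> S1 = {} \<and> S0 \<inter> Sb = {} \<and> S1 \<inter> Sb = {} \<and> S0 \<union> S1 \<union> Sb = UNIV)"

definition Xnu :: "'n set \<times> 'n set \<times> 'n set \<Rightarrow> (real ^ 'n) set" where
  "Xnu \<nu> = (case \<nu> of (S0, S1, Sb) \<Rightarrow>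
     {x. (\<forall>i\<in>S0. x $ i = 0) \<and> (\<forall>i\<in>S1. x $ i \<noteq> 0)})"

definition gnu :: "real \<Rightarrow> (real \<Rightarrow> ereal) \<Rightarrow> 'n set \<times> 'n set \<times> 'n set
                   \<Rightarrow> real ^ 'n \<Rightarrow> ereal" where
  "gnu lam h \<nu> x = ereal (lam * real (l0 x)) + (\<Sum>i\<in>UNIV. h (x $ i))
                   + (if x \<in> Xnu \<nu> then 0 else \<infinity>)"

definition Dnu :: "(real ^ 'm \<Rightarrow> ereal) \<Rightarrow> real \<Rightarrow> (real \<Rightarrow> ereal) \<Rightarrow> real ^ 'n ^ 'm
                   \<Rightarrow> 'n set \<times> 'n set \<times> 'n set \<Rightarrow> real ^ 'm \<Rightarrow> ereal" where
  "Dnu f lam h A \<nu> u = - conj f (- u) - conj (gnu lam h \<nu>) (transpose A *v u)"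

definition phi0 :: "real \<Rightarrow> (real \<Rightarrow> ereal) \<Rightarrow> real \<Rightarrow> ereal" where
  "phi0 lam h v = max (conj h v - ereal lam) 0"

definition phi1 :: "real \<Rightarrow> (real \<Rightarrow> ereal) \<Rightarrow> real \<Rightarrow> ereal" where
  "phi1 lam h v = max (ereal lam - conj h v) 0"

end

theory Submission
  imports Defs
begin

text \<open>
  The function g^\<nu> is separable, g^\<nu>(x) = \<Sum>i. g_i(x_i), so its conjugate splits
  coordinatewise into \<Sum>i. g_i^*(w_i). The coordinate conjugate is 0 for i \<in> S0,
  h^*(w_i) - \<lambda> for i \<in> S1 and max (h^*(w_i) - \<lambda>) 0 for a free index; the last two
  rest on the fact that the supremum defining h^* may be taken over t \<noteq> 0 only, which
  follows from convexity of h, h(0) = 0 and a point s \<noteq> 0 of dom h (supplied by the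
  accumulation hypothesis). Moving a free index into S0 therefore lowers the conjugate
  by \<phi>0(w_i), moving it into S1 lowers it by \<phi>1(w_i), and the identity for
  D^\<nu> = -f^*(-u) - (g^\<nu>)^*(A^T u) is extended-real bookkeeping.
\<close>

lemma sum_ereal_not_MInfty:
  fixes f :: "'a \<Rightarrow> ereal"
  shows "(\<And>i. i \<in> N \<Longrightarrow> f i \<noteq> -\<infinity>) \<Longrightarrow> sum f N \<noteq> -\<infinity>"
  by (induction N rule: infinite_finite_induct) auto

lemma ereal_minus_sum:
  fixes b :: "'a \<Rightarrow> ereal"
  assumes "finite N" "\<And>i. i \<in> N \<Longrightarrow> b i \<noteq> -\<infinity>"
  shows "ereal (\<Sum>i\<in>N. a i) - (\<Sum>i\<in>N. b i) = (\<Sum>i\<in>N. ereal (a i) - b i)"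
  using assms
proof (induction N rule: finite_induct)
  case (insert n N)
  then have "b n \<noteq> -\<infinity>" "(\<Sum>i\<in>N. b i) \<noteq> -\<infinity>"
    by (auto intro!: sum_ereal_not_MInfty)
  then have "ereal (a n + (\<Sum>i\<in>N. a i)) - (b n + (\<Sum>i\<in>N. b i))
      = (ereal (a n) - b n) + (ereal (\<Sum>i\<in>N. a i) - (\<Sum>i\<in>N. b i))"
    by (cases "b n"; cases "\<Sum>i\<in>N. b i") auto
  with insert show ?case by simp
qed (simp add: zero_ereal_def)

lemma ereal_minus_eq_minus_add_add:
  fixes F C P R :: ereal
  assumes "C \<noteq> -\<infinity>" "0 \<le> P" "0 \<le> R" "R \<noteq> \<infinity>"
    and "\<not> (F - (C + P + R) = -\<infinity> \<and> P = \<infinity>)"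
  shows "F - C = F - (C + P + R) + P + R"
  using assms by (cases F; cases C; cases P; cases R) auto

lemma sum_le_SUP_sum_vec_insert:
  fixes G :: "'n::finite \<Rightarrow> real \<Rightarrow> ereal"
  assumes "n \<notin> N"
  shows "(\<Sum>m\<in>N. G m (x$m)) + G n t \<le> (SUP x::real^'n. \<Sum>m\<in>insert n N. G m (x$m))"
proof -
  define y :: "real^'n" where "y = (\<chi> j. if j = n then t else x$j)"
  have "(\<Sum>m\<in>N. G m (y$m)) = (\<Sum>m\<in>N. G m (x$m))"
    using assms by (intro sum.cong) (auto simp: y_def)
  moreover have "(\<Sum>m\<in>insert n N. G m (y$m)) = G n (y$n) + (\<Sum>m\<in>N. G m (y$m))"
    using assms by (intro sum.insert) auto
  ultimately have "(\<Sum>m\<in>N. G m (x$m)) + G n t = (\<Sum>m\<in>insert n N. G m (y$m))"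
    by (simp add: y_def add.commute)
  also have "\<dots> \<le> (SUP x::real^'n. \<Sum>m\<in>insert n N. G m (x$m))"
    by (rule SUP_upper) simp
  finally show ?thesis .
qed

lemma sum_SUP_le_SUP_sum_vec:
  fixes G :: "'n::finite \<Rightarrow> real \<Rightarrow> ereal"
  assumes not_MInfty: "\<And>i. \<exists>t. G i t \<noteq> -\<infinity>"
  shows "(\<Sum>n\<in>N. SUP t. G n t) \<le> (SUP x::real^'n. \<Sum>n\<in>N. G n (x$n))"
proof (induction N rule: infinite_finite_induct)
  case (insert n N)
  define T where "T = {t. G n t \<noteq> -\<infinity>}"
  define B where "B = (SUP x::real^'n. \<Sum>m\<in>N. G m (x$m))"
  define x0 :: "real^'n" where "x0 = (\<chi> i. SOME t. G i t \<noteq> -\<infinity>)"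
  have x0: "G i (x0$i) \<noteq> -\<infinity>" for i
    unfolding x0_def using someI_ex[OF not_MInfty] by simp
  have "(\<Sum>m\<in>N. G m (x0$m)) \<le> B"
    unfolding B_def by (rule SUP_upper) simp
  then have B: "B \<noteq> -\<infinity>"
    using sum_ereal_not_MInfty[of N, OF x0] by auto
  have "T \<noteq> {}"
    using x0 unfolding T_def by blast
  have "(\<Sum>m\<in>insert n N. SUP t. G m t) = (SUP t. G n t) + (\<Sum>m\<in>N. SUP t. G m t)"
    by (rule sum.insert[OF insert.hyps])
  also have "\<dots> \<le> (SUP t\<in>T. G n t) + B"
  proof (rule add_mono)
    show "(SUP t. G n t) \<le> (SUP t\<in>T. G n t)"
    proof (rule SUP_least)
      show "G n t \<le> (SUP t\<in>T. G n t)" for t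
        by (cases "G n t = -\<infinity>") (auto simp: T_def intro: SUP_upper)
    qed
    show "(\<Sum>m\<in>N. SUP t. G m t) \<le> B"
      unfolding B_def by (rule insert.IH)
  qed
  also have "\<dots> = (SUP t\<in>T. G n t + B)"
    using \<open>T \<noteq> {}\<close> B by (rule SUP_ereal_add_left[symmetric])
  also have "\<dots> \<le> (SUP x::real^'n. \<Sum>m\<in>insert n N. G m (x$m))"
  proof (rule SUP_least)
    fix t assume "t \<in> T"
    then have "G n t \<noteq> -\<infinity>"
      unfolding T_def by simp
    from SUP_ereal_le_addI[OF sum_le_SUP_sum_vec_insert[of n N G _ t, OF insert.hyps(2)] this]
    show "G n t + B \<le> (SUP x::real^'n. \<Sum>m\<in>insert n N. G m (x$m))"
      unfolding B_def by (subst add.commute)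
  qed
  finally show ?case .
qed (auto simp: SUP_constant)

lemma SUP_sum_vec_separable:
  fixes G :: "'n::finite \<Rightarrow> real \<Rightarrow> ereal"
  assumes "\<And>i. \<exists>t. G i t \<noteq> -\<infinity>"
  shows "(SUP x::real^'n. \<Sum>i\<in>UNIV. G i (x$i)) = (\<Sum>i\<in>UNIV. SUP t. G i t)"
proof (rule antisym)
  show "(SUP x::real^'n. \<Sum>i\<in>UNIV. G i (x$i)) \<le> (\<Sum>i\<in>UNIV. SUP t. G i t)"
    by (intro SUP_least sum_mono SUP_upper) auto
  show "(\<Sum>i\<in>UNIV. SUP t. G i t) \<le> (SUP x::real^'n. \<Sum>i\<in>UNIV. G i (x$i))"
    using assms by (rule sum_SUP_le_SUP_sum_vec)
qed

lemma conj_sum_separable: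
  fixes g :: "'n::finite \<Rightarrow> real \<Rightarrow> ereal" and w :: "real^'n"
  assumes proper: "\<And>i. proper_fun (g i)"
  shows "conj (\<lambda>x. \<Sum>i\<in>UNIV. g i (x$i)) w = (\<Sum>i\<in>UNIV. conj (g i) (w$i))"
proof -
  have "\<exists>t. ereal (t * w$i) - g i t \<noteq> -\<infinity>" for i
  proof -
    obtain t where "g i t < \<infinity>" "g i t \<noteq> -\<infinity>"
      using proper[of i] unfolding proper_fun_def by blast
    then show ?thesis by (intro exI[of _ t]) (cases "g i t", auto)
  qed
  note separable = SUP_sum_vec_separable[OF this]
  have "conj (\<lambda>x. \<Sum>i\<in>UNIV. g i (x$i)) w
      = (SUP x::real^'n. \<Sum>i\<in>UNIV. ereal (x$i * w$i) - g i (x$i))"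
    unfolding conj_def inner_vec_def inner_real_def
    using proper by (subst ereal_minus_sum) (auto simp: proper_fun_def)
  also have "\<dots> = (\<Sum>i\<in>UNIV. conj (g i) (w$i))"
    unfolding separable conj_def inner_real_def ..
  finally show ?thesis .
qed

lemma conj_real_split_zero:
  fixes g :: "real \<Rightarrow> ereal"
  shows "conj g v = sup (- g 0) (SUP t\<in>-{0}. ereal (t * v) - g t)"
proof -
  have U: "(UNIV::real set) = insert 0 (-{0})" by auto
  have "conj g v = (SUP t\<in>insert 0 (-{0}). ereal (t * v) - g t)"
    unfolding conj_def inner_real_def by (subst U) (rule refl)
  also have "\<dots> = sup (ereal (0 * v) - g 0) (SUP t\<in>-{0}. ereal (t * v) - g t)"
    by (rule SUP_insert)
  finally have "conj g v = sup (ereal (0 * v) - g 0) (SUP t\<in>-{0}. ereal (t * v) - g t)" .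
  moreover have "ereal (0 * v) - g 0 = - g 0"
    by (cases "g 0") auto
  ultimately show ?thesis
    by (simp only:)
qed

lemma conj_nonneg:
  fixes h :: "real \<Rightarrow> ereal"
  assumes "h 0 = 0"
  shows "0 \<le> conj h v"
  using assms by (simp add: conj_real_split_zero)

lemma convex_fun_le_segment_zero:
  fixes h :: "'a::real_vector \<Rightarrow> ereal"
  assumes "convex_fun h" "h 0 = 0" "h s = ereal c" "0 \<le> \<theta>" "\<theta> \<le> 1"
  shows "h (\<theta> *\<^sub>R s) \<le> ereal (\<theta> * c)"
proof -
  have "(s, c) \<in> epigraph_e h" "(0, 0) \<in> epigraph_e h"
    using assms(2,3) unfolding epigraph_e_def by auto
  then have "\<theta> *\<^sub>R (s, c) + (1 - \<theta>) *\<^sub>R (0, 0) \<in> epigraph_e h"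
    using assms(1,4,5) unfolding convex_fun_def by (intro convexD) auto
  then show ?thesis
    unfolding epigraph_e_def by simp
qed

lemma conj_eq_SUP_nonzero:
  fixes h :: "real \<Rightarrow> ereal"
  assumes proper: "proper_fun h" and convex: "convex_fun h" and h0: "h 0 = 0"
    and s: "s \<in> edom h" "s \<noteq> 0"
  shows "conj h v = (SUP t\<in>-{0}. ereal (t * v) - h t)"
proof -
  define S where "S = (SUP t\<in>-{0}. ereal (t * v) - h t)"
  obtain c where c: "h s = ereal c"
    using s proper unfolding edom_def proper_fun_def by (cases "h s") auto
  have lower: "ereal (\<theta> * (s * v - c)) \<le> S" if "0 < \<theta>" "\<theta> \<le> 1" for \<theta>
  proof -
    have "ereal (\<theta> * (s * v - c)) = ereal ((\<theta> * s) * v) - ereal (\<theta> * c)"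
      by (simp add: algebra_simps)
    also have "\<dots> \<le> ereal ((\<theta> * s) * v) - h (\<theta> * s)"
      using convex_fun_le_segment_zero[OF convex h0 c, of \<theta>] that
      by (intro ereal_minus_mono) auto
    also have "\<dots> \<le> S"
      unfolding S_def using that s(2) by (intro SUP_upper) auto
    finally show ?thesis .
  qed
  \<comment> \<open>let \<theta> tend to 0 in the lower bound \<theta> (s v - c) \<le> S obtained from convexity on [0, s]\<close>
  have "0 \<le> S"
  proof (rule tendsto_upperbound)
    have "((\<lambda>\<theta>. \<theta> * (s * v - c)) \<longlongrightarrow> 0) (at_right 0)"
      by (intro tendsto_mult_left_zero tendsto_ident_at)
    then show "((\<lambda>\<theta>. ereal (\<theta> * (s * v - c))) \<longlongrightarrow> 0) (at_right 0)"
      by (simp add: zero_ereal_def)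
    show "\<forall>\<^sub>F \<theta> in at_right 0. ereal (\<theta> * (s * v - c)) \<le> S"
      using lower by (auto simp: eventually_at_right_field intro!: exI[of _ 1])
  qed simp
  then show ?thesis
    using h0 unfolding conj_real_split_zero S_def by (simp add: sup_absorb2)
qed

lemma transpose_mult_vec_nth:
  fixes A :: "real^'n^'m"
  shows "(transpose A *v u) $ i = column i A \<bullet> u"
  by (simp add: matrix_vector_mult_def transpose_def column_def inner_vec_def mult.commute)

definition gnu_coord :: "real \<Rightarrow> (real \<Rightarrow> ereal) \<Rightarrow> 'n set \<Rightarrow> 'n set \<Rightarrow> 'n \<Rightarrow> real \<Rightarrow> ereal" where
  "gnu_coord lam h S0 S1 i t = ereal (if t = 0 then 0 else lam) + h t
     + (if (i \<in> S0 \<longrightarrow> t = 0) \<and> (i \<in> S1 \<longrightarrow> t \<noteq> 0) then 0 else \<infinity>)"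

definition gnu_coord_conj :: "real \<Rightarrow> (real \<Rightarrow> ereal) \<Rightarrow> 'n set \<Rightarrow> 'n set \<Rightarrow> 'n \<Rightarrow> real \<Rightarrow> ereal" where
  "gnu_coord_conj lam h S0 S1 i v =
     (if i \<in> S0 then 0 else if i \<in> S1 then conj h v - ereal lam else phi0 lam h v)"

lemma sum_if_zero_infty:
  fixes P :: "'n::finite \<Rightarrow> bool"
  shows "(\<Sum>i\<in>UNIV. if P i then 0 else \<infinity>::ereal) = (if \<forall>i. P i then 0 else \<infinity>)"
  by (auto simp: sum_Pinfty)

lemma gnu_eq_sum_gnu_coord:
  "gnu lam h (S0, S1, Sb) = (\<lambda>x::real^'n::finite. \<Sum>i\<in>UNIV. gnu_coord lam h S0 S1 i (x$i))"
proof
  fix x :: "real^'n"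
  have "(\<Sum>i\<in>UNIV. if x$i = 0 then 0 else lam) = (\<Sum>i\<in>{i. x$i \<noteq> 0}. lam)"
    by (rule sum.mono_neutral_cong_right) auto
  then have l0: "(\<Sum>i\<in>UNIV. if x$i = 0 then 0 else lam) = lam * real (l0 x)"
    unfolding l0_def by simp
  have X: "x \<in> Xnu (S0, S1, Sb) \<longleftrightarrow> (\<forall>i. (i \<in> S0 \<longrightarrow> x$i = 0) \<and> (i \<in> S1 \<longrightarrow> x$i \<noteq> 0))"
    unfolding Xnu_def by auto
  have "(\<Sum>i\<in>UNIV. gnu_coord lam h S0 S1 i (x$i))
      = (\<Sum>i\<in>UNIV. ereal (if x$i = 0 then 0 else lam)) + (\<Sum>i\<in>UNIV. h (x$i))
        + (\<Sum>i\<in>UNIV. if (i \<in> S0 \<longrightarrow> x$i = 0) \<and> (i \<in> S1 \<longrightarrow> x$i \<noteq> 0) then 0 else \<infinity>)"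
    unfolding gnu_coord_def by (simp add: sum.distrib)
  also have "\<dots> = gnu lam h (S0, S1, Sb) x"
    unfolding gnu_def sum_if_zero_infty X sum_ereal l0 by simp
  finally show "gnu lam h (S0, S1, Sb) x = (\<Sum>i\<in>UNIV. gnu_coord lam h S0 S1 i (x$i))" ..
qed

lemma proper_gnu_coord:
  assumes "proper_fun h" "h 0 = 0" "s \<in> edom h" "s \<noteq> 0" "S0 \<inter> S1 = {}"
  shows "proper_fun (gnu_coord lam h S0 S1 i)"
proof -
  have "gnu_coord lam h S0 S1 i t \<noteq> -\<infinity>" for t
    using assms(1) unfolding gnu_coord_def proper_fun_def by (cases "h t") auto
  moreover have "gnu_coord lam h S0 S1 i (if i \<in> S1 then s else 0) < \<infinity>"
    using assms(2-5) unfolding gnu_coord_def edom_def by auto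
  ultimately show ?thesis
    unfolding proper_fun_def by blast
qed

lemma conj_gnu_coord:
  fixes h :: "real \<Rightarrow> ereal"
  assumes proper: "proper_fun h" and convex: "convex_fun h" and h0: "h 0 = 0"
    and s: "s \<in> edom h" "s \<noteq> 0" and disjoint: "S0 \<inter> S1 = {}"
  shows "conj (gnu_coord lam h S0 S1 i) v = gnu_coord_conj lam h S0 S1 i v"
proof -
  have at0: "- gnu_coord lam h S0 S1 i 0 = (if i \<in> S1 then -\<infinity> else 0)"
    using h0 disjoint by (auto simp: gnu_coord_def)
  have off0: "ereal (t * v) - gnu_coord lam h S0 S1 i t
      = (if i \<in> S0 then -\<infinity> else ereal (t * v) - h t - ereal lam)" if "t \<noteq> 0" for t
    using that proper unfolding gnu_coord_def proper_fun_def by (cases "h t") auto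
  have "(SUP t\<in>-{0}. ereal (t * v) - gnu_coord lam h S0 S1 i t)
      = (if i \<in> S0 then -\<infinity> else conj h v - ereal lam)"
  proof (cases "i \<in> S0")
    case False
    then have "(SUP t\<in>-{0}. ereal (t * v) - gnu_coord lam h S0 S1 i t)
        = (SUP t\<in>-{0}. ereal (t * v) - h t - ereal lam)"
      by (intro SUP_cong) (auto simp: off0)
    also have "\<dots> = (SUP t\<in>-{0}. ereal (t * v) - h t) - ereal lam"
      by (rule SUP_ereal_minus_left) auto
    finally show ?thesis
      using False conj_eq_SUP_nonzero[OF proper convex h0 s] by simp
  qed (simp add: off0 bot_ereal_def[symmetric])
  then show ?thesis
    unfolding conj_real_split_zero at0 gnu_coord_conj_def phi0_def
    using disjoint by (auto simp: sup_max max.commute)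
qed

lemma conj_gnu:
  fixes h :: "real \<Rightarrow> ereal" and w :: "real^'n::finite"
  assumes "proper_fun h" "convex_fun h" "h 0 = 0" "s \<in> edom h" "s \<noteq> 0" "S0 \<inter> S1 = {}"
  shows "conj (gnu lam h (S0, S1, Sb)) w = (\<Sum>i\<in>UNIV. gnu_coord_conj lam h S0 S1 i (w$i))"
  using assms by (simp add: gnu_eq_sum_gnu_coord conj_sum_separable proper_gnu_coord conj_gnu_coord)

lemma gnu_coord_conj_not_MInfty:
  assumes "h 0 = 0"
  shows "gnu_coord_conj lam h S0 S1 i v \<noteq> -\<infinity>"
  using conj_nonneg[of h v, OF assms]
  by (cases "conj h v") (auto simp: gnu_coord_conj_def phi0_def)

lemma phi1_not_PInfty:
  assumes "h 0 = 0"
  shows "phi1 lam h v \<noteq> \<infinity>"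
  using conj_nonneg[of h v, OF assms]
  by (cases "conj h v") (auto simp: phi1_def max_def)

lemma gnu_coord_conj_refine:
  assumes "conj h v \<noteq> -\<infinity>" "S0' \<inter> S1' = {}" "S0 \<subseteq> S0'" "S1 \<subseteq> S1'"
  shows "gnu_coord_conj lam h S0 S1 i v = gnu_coord_conj lam h S0' S1' i v
           + (if i \<in> S0' - S0 then phi0 lam h v else 0)
           + (if i \<in> S1' - S1 then phi1 lam h v else 0)"
  using assms by (cases "conj h v") (auto simp: gnu_coord_conj_def phi0_def phi1_def max_def)

lemma conj_gnu_refine:
  fixes h :: "real \<Rightarrow> ereal" and w :: "real^'n::finite"
  assumes h: "proper_fun h" "convex_fun h" "h 0 = 0" "s \<in> edom h" "s \<noteq> 0"
    and disjoint: "S0' \<inter> S1' = {}" and sub: "S0 \<subseteq> S0'" "S1 \<subseteq> S1'"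
  shows "conj (gnu lam h (S0, S1, Sb)) w = conj (gnu lam h (S0', S1', Sb')) w
           + (\<Sum>i\<in>S0' - S0. phi0 lam h (w$i)) + (\<Sum>i\<in>S1' - S1. phi1 lam h (w$i))"
proof -
  have "S0 \<inter> S1 = {}"
    using disjoint sub by blast
  then have "conj (gnu lam h (S0, S1, Sb)) w = (\<Sum>i\<in>UNIV. gnu_coord_conj lam h S0 S1 i (w$i))"
    by (rule conj_gnu[OF h])
  also have "\<dots> = (\<Sum>i\<in>UNIV. gnu_coord_conj lam h S0' S1' i (w$i)
           + (if i \<in> S0' - S0 then phi0 lam h (w$i) else 0)
           + (if i \<in> S1' - S1 then phi1 lam h (w$i) else 0))"
    using conj_nonneg[of h, OF h(3)] disjoint sub
    by (intro sum.cong refl gnu_coord_conj_refine) (auto simp: not_MInfty_nonneg)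
  also have "\<dots> = conj (gnu lam h (S0', S1', Sb')) w
           + (\<Sum>i\<in>S0' - S0. phi0 lam h (w$i)) + (\<Sum>i\<in>S1' - S1. phi1 lam h (w$i))"
    by (simp only: sum.distrib sum.inter_restrict[OF finite, symmetric] Int_UNIV_left
        conj_gnu[OF h disjoint])
  finally show ?thesis .
qed

theorem proposition3p3:
  fixes lam :: real
    and A :: "real ^ 'n ^ 'm"
    and f :: "real ^ 'm \<Rightarrow> ereal"
    and h :: "real \<Rightarrow> ereal"
    and S0 S1 Sb S0' S1' Sb' :: "'n set"
  assumes lam_pos: "lam > 0"
    and f_proper: "proper_fun f" and f_closed: "closed_fun f" and f_convex: "convex_fun f"
    and h_proper: "proper_fun h" and h_closed: "closed_fun h" and h_convex: "convex_fun h"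
    and h_dom0: "0 \<in> edom h" and h0: "h 0 = 0"
    and h_acc: "0 islimpt edom h"
    and nu: "partition3 (S0, S1, Sb)"
    and nu': "partition3 (S0', S1', Sb')"
    and sub0: "S0 \<subseteq> S0'" and sub1: "S1 \<subseteq> S1'"
  shows "\<forall>u :: real ^ 'm.
     \<not> (Dnu f lam h A (S0, S1, Sb) u = -\<infinity> \<and>
        (\<Sum>i\<in>S0' - S0. phi0 lam h (column i A \<bullet> u)) = \<infinity>) \<longrightarrow>
     Dnu f lam h A (S0', S1', Sb') u =
       Dnu f lam h A (S0, S1, Sb) u
       + (\<Sum>i\<in>S0' - S0. phi0 lam h (column i A \<bullet> u))
       + (\<Sum>i\<in>S1' - S1. phi1 lam h (column i A \<bullet> u))"
proof (intro allI impI)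
  fix u :: "real ^ 'm"
  let ?F = "- conj f (- u)"
  let ?C = "conj (gnu lam h (S0', S1', Sb')) (transpose A *v u)"
  let ?P = "\<Sum>i\<in>S0' - S0. phi0 lam h (column i A \<bullet> u)"
  let ?R = "\<Sum>i\<in>S1' - S1. phi1 lam h (column i A \<bullet> u)"
  assume guard: "\<not> (Dnu f lam h A (S0, S1, Sb) u = -\<infinity> \<and> ?P = \<infinity>)"
  obtain s where s: "s \<in> edom h" "s \<noteq> 0"
    using h_acc unfolding islimpt_def by (metis open_UNIV UNIV_I)
  have disjoint: "S0' \<inter> S1' = {}"
    using nu' unfolding partition3_def by auto
  have "conj (gnu lam h (S0, S1, Sb)) (transpose A *v u) = ?C + ?P + ?R"
    using conj_gnu_refine[OF h_proper h_convex h0 s disjoint sub0 sub1,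
        where Sb = Sb and Sb' = Sb' and w = "transpose A *v u"]
    unfolding transpose_mult_vec_nth .
  then have D: "Dnu f lam h A (S0, S1, Sb) u = ?F - (?C + ?P + ?R)"
    unfolding Dnu_def by (rule arg_cong)
  have D': "Dnu f lam h A (S0', S1', Sb') u = ?F - ?C"
    unfolding Dnu_def ..
  have "?C \<noteq> -\<infinity>"
    unfolding conj_gnu[OF h_proper h_convex h0 s disjoint]
    by (intro sum_ereal_not_MInfty gnu_coord_conj_not_MInfty h0)
  moreover have "0 \<le> ?P" "0 \<le> ?R" "?R \<noteq> \<infinity>"
    using phi1_not_PInfty[of h, OF h0] by (auto simp: phi0_def phi1_def sum_Pinfty intro: sum_nonneg)
  ultimately show "Dnu f lam h A (S0', S1', Sb') u = Dnu f lam h A (S0, S1, Sb) u + ?P + ?R"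
    using guard unfolding D D' by (rule ereal_minus_eq_minus_add_add)
qed

end
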